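(* Let $\mathfrak g = \bigoplus_i \mathfrak I_i$ be a decomposition of $\mathfrak g$ into ideals which are pairwise orthogonal for an $\mathrm{Ad}_G$-invariant nondegenerate symmetric bilinear form on $\mathfrak g$, let $\mathfrak t_i = \mathfrak t\cap\mathfrak I_i$, $\Phi_{\mathfrak I_i}$ the root system of $(\mathfrak I_i,\mathfrak t_i)$ (so that $\mathfrak t = \bigoplus_i \mathfrak t_i$, $\Phi_{\mathfrak g} = \bigsqcup_i \Phi_{\mathfrak I_i}$, and $W_{\mathfrak g} = \prod_i W_{\mathfrak I_i}$ with $W_{\mathfrak I_i} = W(\Phi_{\mathfrak I_i})$ acting on $\mathfrak t_i$ and trivially on the other summands). Let $\Phi\subseteq \Phi_{\mathfrak g}$ be a root subsystem, $\Phi^{(i)} = \Phi\cap\Phi_{\mathfrak I_i}$, $$\mathbf B = \bigcap_{\alpha\in\Phi}\ker(\alpha)\cap\bigcap_{\alpha\in\Phi_{\mathfrak g}\setminus\Phi}(\mathfrak t\setminus\ker\alpha),\qquad \mathbf B_i = \bigcap_{\alpha\in\Phi^{(i)}}\ker(\alpha)\cap\bigcap_{\alpha\in\Phi_{\mathfrak I_i}\setminus\Phi^{(i)}}(\mathfrak t_i\setminus\ker\alpha)\subseteq\mathfrak t_i .$$ Let $\overline{\mathbf B}$ be the topological quotient of $\mathbf B$ by the relation $X\sim Y$ iff $W_{\mathfrak g}X = W_{\mathfrak g}Y$, and $\overline{\mathbf B}_i$ the topological quotient of $\mathbf B_i$ by the relation $X\sim Y$ iff $W_{\mathfrak I_i}X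 = W_{\mathfrak I_i}Y$. Then $\overline{\mathbf B}$ is homeomorphic to the product $\prod_i\overline{\mathbf B}_i$.
   Context: $G$ is a connected complex reductive Lie group, $\mathfrak g = \mathrm{Lie}(G)$, $T\subseteq G$ a maximal torus, $\mathfrak t = \mathrm{Lie}(T)$, $\Phi_{\mathfrak g}$ the root system of $(\mathfrak g,\mathfrak t)$, $W_{\mathfrak g}$ the Weyl group acting on $\mathfrak t$. Roots of $\Phi_{\mathfrak I_i}$ are regarded as elements of $\mathfrak t^\vee$ vanishing on $\mathfrak t_j$ for $j\ne i$. Empty intersections of kernels are the whole ambient space. *)

theory Defs
  imports "HOL-Analysis.Analysis"
begin

text \<open>The Cartan subalgebra t is modelled as
  the finite-dimensional complex vector space complex^'n (with its Euclidean topology);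
  roots are complex-linear functionals t -> complex; each root alpha has a coroot
  cor alpha in t with alpha (cor alpha) = 2; the reflection s_alpha acts on t by
  X |-> X - alpha(X) cor(alpha).\<close>

definition clinear_fun :: "(complex^'n \<Rightarrow> complex) \<Rightarrow> bool" where
  "clinear_fun a \<longleftrightarrow> (\<forall>x y. a (x + y) = a x + a y) \<and> (\<forall>c x. a (c *s x) = c * a x)"

definition csubspace_vec :: "(complex^'n) set \<Rightarrow> bool" where
  "csubspace_vec S \<longleftrightarrow> 0 \<in> S \<and> (\<forall>x\<in>S. \<forall>y\<in>S. x + y \<in> S) \<and> (\<forall>c. \<forall>x\<in>S. c *s x \<in> S)"

definition internal_direct_sum :: "'i set \<Rightarrow> ('i \<Rightarrow> (complex^'n) set) \<Rightarrow> bool" where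
  "internal_direct_sum I T \<longleftrightarrow> finite I \<and> (\<forall>i\<in>I. csubspace_vec (T i)) \<and>
     (\<forall>x. \<exists>!y. y \<in> (\<Pi>\<^sub>E i\<in>I. T i) \<and> x = (\<Sum>i\<in>I. y i))"

definition refl :: "((complex^'n \<Rightarrow> complex) \<Rightarrow> complex^'n) \<Rightarrow> (complex^'n \<Rightarrow> complex)
    \<Rightarrow> complex^'n \<Rightarrow> complex^'n" where
  "refl cor a X = X - a X *s cor a"

definition drefl :: "((complex^'n \<Rightarrow> complex) \<Rightarrow> complex^'n) \<Rightarrow> (complex^'n \<Rightarrow> complex)
    \<Rightarrow> (complex^'n \<Rightarrow> complex) \<Rightarrow> (complex^'n \<Rightarrow> complex)" where
  "drefl cor a b = (\<lambda>x. b x - b (cor a) * a x)"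

definition root_system_in :: "(complex^'n) set \<Rightarrow> (complex^'n \<Rightarrow> complex) set
    \<Rightarrow> ((complex^'n \<Rightarrow> complex) \<Rightarrow> complex^'n) \<Rightarrow> bool" where
  "root_system_in V \<Phi> cor \<longleftrightarrow> finite \<Phi> \<and>
     (\<forall>a\<in>\<Phi>. clinear_fun a \<and> cor a \<in> V \<and> a (cor a) = 2 \<and>
        (\<forall>b\<in>\<Phi>. b (cor a) \<in> \<int> \<and> drefl cor a b \<in> \<Phi>))"

inductive_set weyl_group :: "((complex^'n \<Rightarrow> complex) \<Rightarrow> complex^'n) \<Rightarrow> (complex^'n \<Rightarrow> complex) set
    \<Rightarrow> (complex^'n \<Rightarrow> complex^'n) set"
  for cor \<Phi> where
  weyl_id: "id \<in> weyl_group cor \<Phi>"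
| weyl_step: "a \<in> \<Phi> \<Longrightarrow> w \<in> weyl_group cor \<Phi> \<Longrightarrow> refl cor a \<circ> w \<in> weyl_group cor \<Phi>"

definition root_subsystem :: "((complex^'n \<Rightarrow> complex) \<Rightarrow> complex^'n) \<Rightarrow> (complex^'n \<Rightarrow> complex) set
    \<Rightarrow> (complex^'n \<Rightarrow> complex) set \<Rightarrow> bool" where
  "root_subsystem cor \<Phi> \<Phi>g \<longleftrightarrow> \<Phi> \<subseteq> \<Phi>g \<and> (\<forall>a\<in>\<Phi>. \<forall>b\<in>\<Phi>. drefl cor a b \<in> \<Phi>)"

definition stratum :: "(complex^'n) set \<Rightarrow> (complex^'n \<Rightarrow> complex) set \<Rightarrow> (complex^'n \<Rightarrow> complex) set
    \<Rightarrow> (complex^'n) set" where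
  "stratum V \<Phi>all \<Phi> = {X \<in> V. (\<forall>a\<in>\<Phi>. a X = 0) \<and> (\<forall>a\<in>\<Phi>all - \<Phi>. a X \<noteq> 0)}"

definition orbit_rel :: "('a \<Rightarrow> 'a) set \<Rightarrow> 'a set \<Rightarrow> ('a \<times> 'a) set" where
  "orbit_rel W S = {(X, Y). X \<in> S \<and> Y \<in> S \<and> (\<lambda>w. w X) ` W = (\<lambda>w. w Y) ` W}"

definition quot_topology :: "'a topology \<Rightarrow> ('a \<times> 'a) set \<Rightarrow> 'a set topology" where
  "quot_topology X R = topology (\<lambda>U. U \<subseteq> topspace X // R \<and> openin X (\<Union>U))"

end

theory Submission
  imports Defs
begin

text \<open>Decompose X as the sum of its components X_i along t = t_1 + ... + t_k. A root of the
  i-th summand only sees X_i and the reflection in it only moves X_i, so X |-> (X_i)_i identifies B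
  with the product of the B_i, and W acts on it as the product of the W_i; hence the orbit relation
  on B is the product of the orbit relations on the B_i. A product of continuous open surjections
  is a quotient map, and each projection B_i -> B_i / W_i is open because W_i acts by linear maps
  and a Weyl group element sending one point of a stratum into the stratum sends all of it there.\<close>

lemma quot_topology_istopology:
  assumes R: "equiv (topspace X) R"
  shows "istopology (\<lambda>U. U \<subseteq> topspace X // R \<and> openin X (\<Union>U))"
  unfolding istopology_def
proof (rule conjI; intro allI impI)
  fix S T
  assume S: "S \<subseteq> topspace X // R \<and> openin X (\<Union>S)"
    and T: "T \<subseteq> topspace X // R \<and> openin X (\<Union>T)"
  have "\<Union>(S \<inter> T) = \<Union>S \<inter> \<Union>T"
    using S T quotient_disj[OF R] by blast
  then show "S \<inter> T \<subseteq> topspace X // R \<and> openin X (\<Union>(S \<inter> T))"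
    using S T by auto
next
  fix K
  assume "\<forall>S\<in>K. S \<subseteq> topspace X // R \<and> openin X (\<Union>S)"
  moreover have "\<Union>(\<Union>K) = \<Union>(Union ` K)"
    by blast
  ultimately show "\<Union>K \<subseteq> topspace X // R \<and> openin X (\<Union>(\<Union>K))"
    by (auto intro: openin_Union)
qed

lemma openin_quot_topology:
  assumes "equiv (topspace X) R"
  shows "openin (quot_topology X R) U \<longleftrightarrow> U \<subseteq> topspace X // R \<and> openin X (\<Union>U)"
  unfolding quot_topology_def by (simp add: topology_inverse'[OF quot_topology_istopology[OF assms]])

lemma topspace_quot_topology:
  assumes R: "equiv (topspace X) R"
  shows "topspace (quot_topology X R) = topspace X // R"
proof (rule antisym)
  show "topspace (quot_topology X R) \<subseteq> topspace X // R"
    using openin_quot_topology[OF R] openin_topspace by blast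
  have "openin (quot_topology X R) (topspace X // R)"
    using openin_quot_topology[OF R] Union_quotient[OF R] by simp
  then show "topspace X // R \<subseteq> topspace (quot_topology X R)"
    by (rule openin_subset)
qed

lemma quotient_map_quot_topology:
  assumes R: "equiv (topspace X) R"
  shows "quotient_map X (quot_topology X R) (\<lambda>x. R `` {x})"
  unfolding quotient_map_def
proof (intro conjI allI impI)
  show "(\<lambda>x. R `` {x}) ` topspace X = topspace (quot_topology X R)"
    by (auto simp: topspace_quot_topology[OF R] quotient_def)
  fix U
  assume U: "U \<subseteq> topspace (quot_topology X R)"
  have "{x \<in> topspace X. R `` {x} \<in> U} = \<Union>U"
  proof
    show "{x \<in> topspace X. R `` {x} \<in> U} \<subseteq> \<Union>U"
      using equiv_class_self[OF R] by blast
    show "\<Union>U \<subseteq> {x \<in> topspace X. R `` {x} \<in> U}"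
    proof
      fix x
      assume "x \<in> \<Union>U"
      then obtain C where C: "C \<in> U" "x \<in> C"
        by blast
      then obtain y where "y \<in> topspace X" "C = R `` {y}"
        using U by (auto simp: topspace_quot_topology[OF R] elim: quotientE)
      then have "R `` {x} = C" and "x \<in> topspace X"
        using C(2) equiv_class_eq[OF R] R by (auto dest: equiv_type)
      then show "x \<in> {x \<in> topspace X. R `` {x} \<in> U}"
        using C(1) by blast
    qed
  qed
  then show "openin X {x \<in> topspace X. R `` {x} \<in> U} \<longleftrightarrow> openin (quot_topology X R) U"
    using U by (simp add: openin_quot_topology[OF R] topspace_quot_topology[OF R])
qed

lemma open_map_quot_topology:
  assumes R: "equiv (topspace X) R"
    and saturation_open: "\<And>V. openin X V \<Longrightarrow> openin X (R `` V)"
  shows "open_map X (quot_topology X R) (\<lambda>x. R `` {x})"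
  unfolding open_map_def
proof (intro allI impI)
  fix V
  assume V: "openin X V"
  have "(\<lambda>x. R `` {x}) ` V \<subseteq> topspace X // R"
    using openin_subset[OF V] by (auto intro: quotientI)
  moreover have "\<Union>((\<lambda>x. R `` {x}) ` V) = R `` V"
    by blast
  ultimately show "openin (quot_topology X R) ((\<lambda>x. R `` {x}) ` V)"
    using saturation_open[OF V] by (simp add: openin_quot_topology[OF R])
qed

lemma quot_topology_homeomorphic_space:
  assumes R: "equiv (topspace X) R" and g: "quotient_map X Y g"
    and fibres: "\<And>x y. x \<in> topspace X \<Longrightarrow> y \<in> topspace X \<Longrightarrow> g x = g y \<longleftrightarrow> (x, y) \<in> R"
  shows "quot_topology X R homeomorphic_space Y"
proof -
  let ?q = "\<lambda>x. R `` {x}"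
  have q: "quotient_map X (quot_topology X R) ?q"
    by (rule quotient_map_quot_topology[OF R])
  have "g x = g y" if "x \<in> topspace X" "y \<in> topspace X" "?q x = ?q y" for x y
    using that by (simp add: eq_equiv_class_iff[OF R] fibres)
  then obtain f where f: "continuous_map (quot_topology X R) Y f"
    and "f ` topspace (quot_topology X R) = g ` topspace X"
    and fq: "\<And>x. x \<in> topspace X \<Longrightarrow> f (?q x) = g x"
    by (rule quotient_map_lift_exists[OF q quotient_imp_continuous_map[OF g]]) auto
  have "quotient_map X Y (f \<circ> ?q)"
    by (rule quotient_map_eq[OF g]) (simp add: fq)
  then have "quotient_map (quot_topology X R) Y f"
    by (rule quotient_map_from_composition[OF quotient_imp_continuous_map[OF q] f])
  moreover have "inj_on f (topspace (quot_topology X R))"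
  proof (rule inj_onI)
    fix C D
    assume "C \<in> topspace (quot_topology X R)" "D \<in> topspace (quot_topology X R)" and fCD: "f C = f D"
    then obtain x y where x: "x \<in> topspace X" "C = ?q x" and y: "y \<in> topspace X" "D = ?q y"
      unfolding topspace_quot_topology[OF R] by (metis quotientE)
    then have "g x = g y"
      using fCD fq by simp
    then show "C = D"
      using x y by (simp add: fibres eq_equiv_class_iff[OF R])
  qed
  ultimately show ?thesis
    unfolding homeomorphic_space homeomorphic_map_def by blast
qed

lemma continuous_map_product_map:
  assumes "\<And>i. i \<in> I \<Longrightarrow> continuous_map (X i) (Y i) (f i)"
  shows "continuous_map (product_topology X I) (product_topology Y I) (\<lambda>x. \<lambda>i\<in>I. f i (x i))"
  unfolding continuous_map_componentwise
proof (intro conjI ballI)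
  fix k
  assume k: "k \<in> I"
  show "continuous_map (product_topology X I) (Y k) (\<lambda>x. (\<lambda>i\<in>I. f i (x i)) k)"
    using continuous_map_compose[OF continuous_map_product_projection[OF k, of X] assms[OF k]] k
    by (simp add: o_def)
qed auto

lemma open_map_product_map:
  assumes opn: "\<And>i. i \<in> I \<Longrightarrow> open_map (X i) (Y i) (f i)"
    and surj: "\<And>i. i \<in> I \<Longrightarrow> f i ` topspace (X i) = topspace (Y i)"
  shows "open_map (product_topology X I) (product_topology Y I) (\<lambda>x. \<lambda>i\<in>I. f i (x i))"
  unfolding open_map_def
proof (intro allI impI)
  let ?F = "\<lambda>x. \<lambda>i\<in>I. f i (x i)"
  fix S
  assume S: "openin (product_topology X I) S"
  show "openin (product_topology Y I) (?F ` S)"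
    unfolding openin_product_topology_alt
  proof
    fix y
    assume "y \<in> ?F ` S"
    then obtain x where x: "x \<in> S" "y = ?F x" by blast
    then obtain U where U: "finite {i \<in> I. U i \<noteq> topspace (X i)}" "\<forall>i\<in>I. openin (X i) (U i)"
      "x \<in> Pi\<^sub>E I U" "Pi\<^sub>E I U \<subseteq> S"
      using S unfolding openin_product_topology_alt by blast
    define V where "V i = f i ` U i" for i
    have "{i \<in> I. V i \<noteq> topspace (Y i)} \<subseteq> {i \<in> I. U i \<noteq> topspace (X i)}"
      unfolding V_def using surj by blast
    then have "finite {i \<in> I. V i \<noteq> topspace (Y i)}"
      using U(1) finite_subset by blast
    moreover have "\<forall>i\<in>I. openin (Y i) (V i)"
      using U(2) opn by (simp add: V_def open_map_def)
    moreover have "y \<in> Pi\<^sub>E I V"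
      using U(3) x(2) by (auto simp: V_def PiE_iff)
    moreover have "Pi\<^sub>E I V \<subseteq> ?F ` S"
    proof
      fix y'
      assume y': "y' \<in> Pi\<^sub>E I V"
      then have pre: "\<forall>i\<in>I. \<exists>z. z \<in> U i \<and> y' i = f i z"
        unfolding V_def PiE_iff by blast
      obtain z where z: "\<forall>i\<in>I. z i \<in> U i \<and> y' i = f i (z i)"
        using bchoice[OF pre] by blast
      have "restrict z I \<in> Pi\<^sub>E I U"
        using z by simp
      then have "restrict z I \<in> S"
        using U(4) by (rule subsetD[rotated])
      moreover have "y' = ?F (restrict z I)"
        using y' z by (auto simp: fun_eq_iff PiE_iff extensional_def)
      ultimately show "y' \<in> ?F ` S"
        by blast
    qed
    ultimately show "\<exists>V. finite {i \<in> I. V i \<noteq> topspace (Y i)} \<and> (\<forall>i\<in>I. openin (Y i) (V i)) \<and>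
        y \<in> Pi\<^sub>E I V \<and> Pi\<^sub>E I V \<subseteq> ?F ` S"
      by (intro exI[of _ V] conjI)
  qed
qed

lemma quotient_map_product_map:
  assumes cont: "\<And>i. i \<in> I \<Longrightarrow> continuous_map (X i) (Y i) (f i)"
    and opn: "\<And>i. i \<in> I \<Longrightarrow> open_map (X i) (Y i) (f i)"
    and surj: "\<And>i. i \<in> I \<Longrightarrow> f i ` topspace (X i) = topspace (Y i)"
  shows "quotient_map (product_topology X I) (product_topology Y I) (\<lambda>x. \<lambda>i\<in>I. f i (x i))"
    (is "quotient_map _ _ ?F")
proof (rule continuous_open_imp_quotient_map)
  show cont_F: "continuous_map (product_topology X I) (product_topology Y I) ?F"
    using cont by (rule continuous_map_product_map)
  show "open_map (product_topology X I) (product_topology Y I) ?F"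
    using opn surj by (rule open_map_product_map)
  show "?F ` topspace (product_topology X I) = topspace (product_topology Y I)"
  proof
    show "?F ` topspace (product_topology X I) \<subseteq> topspace (product_topology Y I)"
      using cont_F by (rule continuous_map_image_subset_topspace)
    show "topspace (product_topology Y I) \<subseteq> ?F ` topspace (product_topology X I)"
    proof
      fix y
      assume y: "y \<in> topspace (product_topology Y I)"
      then have pre: "\<forall>i\<in>I. \<exists>z. z \<in> topspace (X i) \<and> y i = f i z"
        using surj unfolding topspace_product_topology PiE_iff by (metis imageE)
      obtain z where z: "\<forall>i\<in>I. z i \<in> topspace (X i) \<and> y i = f i (z i)"
        using bchoice[OF pre] by blast
      have "restrict z I \<in> topspace (product_topology X I)"
        using z by simp
      moreover have "y = ?F (restrict z I)"
        using y z by (auto simp: fun_eq_iff PiE_iff extensional_def)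
      ultimately show "y \<in> ?F ` topspace (product_topology X I)"
        by blast
    qed
  qed
qed

lemma scaleR_eq_vector_smult: "(r::real) *\<^sub>R (x::complex^'n) = complex_of_real r *s x"
  by (simp only: vec_eq_iff vector_scaleR_component vector_smult_component)
    (simp add: scaleR_conv_of_real)

lemma clinear_fun_add: "clinear_fun a \<Longrightarrow> a (x + y) = a x + a y"
  unfolding clinear_fun_def by blast

lemma clinear_fun_scale: "clinear_fun a \<Longrightarrow> a (c *s x) = c * a x"
  unfolding clinear_fun_def by blast

lemma clinear_fun_diff: "clinear_fun a \<Longrightarrow> a (x - y) = a x - a y"
  by (metis clinear_fun_add eq_diff_eq)

lemma clinear_fun_zero: "clinear_fun a \<Longrightarrow> a 0 = 0"
  using clinear_fun_diff[of a 0 0] by simp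

lemma clinear_fun_sum: "clinear_fun a \<Longrightarrow> a (sum f J) = (\<Sum>j\<in>J. a (f j))"
  by (induction J rule: infinite_finite_induct) (auto simp: clinear_fun_zero clinear_fun_add)

lemma continuous_on_linear_vec:
  fixes f :: "complex^'n \<Rightarrow> 'a::real_normed_vector"
  shows "linear f \<Longrightarrow> continuous_on S f"
  by (simp add: linear_continuous_on linear_conv_bounded_linear)

lemma linear_refl: "clinear_fun a \<Longrightarrow> linear (refl cor a)"
  unfolding refl_def
  by (rule linearI) (auto simp: clinear_fun_add clinear_fun_scale scaleR_eq_vector_smult)

lemma refl_refl: "clinear_fun a \<Longrightarrow> a (cor a) = 2 \<Longrightarrow> refl cor a (refl cor a x) = x"
  unfolding refl_def by (simp add: clinear_fun_diff clinear_fun_scale vec_eq_iff algebra_simps)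

lemma comp_refl_eq_drefl: "clinear_fun b \<Longrightarrow> b \<circ> refl cor a = drefl cor a b"
  unfolding refl_def drefl_def by (auto simp: clinear_fun_diff clinear_fun_scale mult.commute)

definition coroot_normalized ::
    "((complex^'n \<Rightarrow> complex) \<Rightarrow> complex^'n) \<Rightarrow> (complex^'n \<Rightarrow> complex) set \<Rightarrow> bool"
  where "coroot_normalized cor \<Psi> \<longleftrightarrow> (\<forall>a\<in>\<Psi>. clinear_fun a \<and> a (cor a) = 2)"

lemma root_system_in_imp_coroot_normalized: "root_system_in V \<Psi> cor \<Longrightarrow> coroot_normalized cor \<Psi>"
  unfolding root_system_in_def coroot_normalized_def by blast

lemma refl_in_weyl_group: "a \<in> \<Psi> \<Longrightarrow> refl cor a \<in> weyl_group cor \<Psi>"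
  using weyl_step[OF _ weyl_id, of a \<Psi> cor] by simp

lemma weyl_group_comp: "u \<in> weyl_group cor \<Psi> \<Longrightarrow> v \<in> weyl_group cor \<Psi> \<Longrightarrow> u \<circ> v \<in> weyl_group cor \<Psi>"
  by (induction u rule: weyl_group.induct) (auto simp: comp_assoc intro: weyl_group.intros)

lemma weyl_group_mono: "w \<in> weyl_group cor \<Psi> \<Longrightarrow> \<Psi> \<subseteq> \<Psi>' \<Longrightarrow> w \<in> weyl_group cor \<Psi>'"
  by (induction w rule: weyl_group.induct) (auto intro: weyl_group.intros)

lemma weyl_group_inverse:
  assumes "w \<in> weyl_group cor \<Psi>" and \<Psi>: "coroot_normalized cor \<Psi>"
  obtains w' where "w' \<in> weyl_group cor \<Psi>" "\<And>x. w' (w x) = x"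
  using assms(1)
proof (induction w arbitrary: thesis rule: weyl_group.induct)
  case weyl_id
  then show ?case using weyl_group.weyl_id by fastforce
next
  case (weyl_step a w)
  obtain w' where w': "w' \<in> weyl_group cor \<Psi>" "\<And>x. w' (w x) = x"
    using weyl_step.IH by blast
  have "refl cor a (refl cor a x) = x" for x
    using \<Psi> weyl_step.hyps(1) by (intro refl_refl) (auto simp: coroot_normalized_def)
  then show ?case
    using weyl_step.prems[of "w' \<circ> refl cor a"] w'
      weyl_group_comp[OF w'(1) refl_in_weyl_group[OF weyl_step.hyps(1)]]
    by (simp add: o_def)
qed

lemma linear_weyl_group: "w \<in> weyl_group cor \<Psi> \<Longrightarrow> coroot_normalized cor \<Psi> \<Longrightarrow> linear w"
  by (induction w rule: weyl_group.induct)
    (auto simp: coroot_normalized_def linear_id intro: linear_compose linear_refl)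

lemma weyl_group_orbit_eq_iff:
  fixes X Y :: "complex^'n"
  assumes \<Psi>: "coroot_normalized cor \<Psi>"
  shows "(\<lambda>w. w X) ` weyl_group cor \<Psi> = (\<lambda>w. w Y) ` weyl_group cor \<Psi> \<longleftrightarrow> (\<exists>w\<in>weyl_group cor \<Psi>. Y = w X)"
proof
  assume "(\<lambda>w. w X) ` weyl_group cor \<Psi> = (\<lambda>w. w Y) ` weyl_group cor \<Psi>"
  moreover have "Y \<in> (\<lambda>w. w Y) ` weyl_group cor \<Psi>"
    using weyl_id by (intro image_eqI[of _ _ id]) auto
  ultimately show "\<exists>w\<in>weyl_group cor \<Psi>. Y = w X"
    by auto
next
  assume "\<exists>w\<in>weyl_group cor \<Psi>. Y = w X"
  then obtain w where w: "w \<in> weyl_group cor \<Psi>" "Y = w X"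
    by blast
  obtain w' where w': "w' \<in> weyl_group cor \<Psi>" "\<And>x. w' (w x) = x"
    using weyl_group_inverse[OF w(1) \<Psi>] by blast
  have "u X = (u \<circ> w') Y" and "u Y = (u \<circ> w) X" for u :: "complex^'n \<Rightarrow> complex^'n"
    using w w' by simp_all
  then show "(\<lambda>w. w X) ` weyl_group cor \<Psi> = (\<lambda>w. w Y) ` weyl_group cor \<Psi>"
    using weyl_group_comp w(1) w'(1) by blast
qed

lemma comp_weyl_group_closed:
  assumes "w \<in> weyl_group cor \<Psi>" "coroot_normalized cor \<Psi>"
    and "\<forall>a\<in>\<Psi>. \<forall>b\<in>\<Psi>. drefl cor a b \<in> \<Psi>" "b \<in> \<Psi>"
  shows "b \<circ> w \<in> \<Psi>"
  using assms
proof (induction w arbitrary: b rule: weyl_group.induct)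
  case weyl_id
  then show ?case by simp
next
  case (weyl_step a w)
  have "b \<circ> refl cor a = drefl cor a b"
    using weyl_step.prems by (intro comp_refl_eq_drefl) (auto simp: coroot_normalized_def)
  then have "b \<circ> refl cor a \<in> \<Psi>"
    using weyl_step.hyps(1) weyl_step.prems by auto
  then have "(b \<circ> refl cor a) \<circ> w \<in> \<Psi>"
    using weyl_step.IH weyl_step.prems by blast
  then show ?case
    by (metis comp_assoc)
qed

lemma equiv_orbit_rel: "equiv S (orbit_rel W S)"
  unfolding equiv_def refl_on_def sym_def trans_def orbit_rel_def by auto

lemma mem_stratum_iff:
  assumes "\<Phi>' \<subseteq> \<Psi>"
  shows "X \<in> stratum V \<Psi> \<Phi>' \<longleftrightarrow> X \<in> V \<and> (\<forall>a\<in>\<Psi>. a X = 0 \<longleftrightarrow> a \<in> \<Phi>')"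
  using assms unfolding stratum_def by blast

lemma weyl_group_stratum_transport:
  assumes \<Psi>: "coroot_normalized cor \<Psi>" and closed: "\<forall>a\<in>\<Psi>. \<forall>b\<in>\<Psi>. drefl cor a b \<in> \<Psi>"
    and sub: "\<Phi>' \<subseteq> \<Psi>" and w: "w \<in> weyl_group cor \<Psi>" and V: "\<And>x. x \<in> V \<Longrightarrow> w x \<in> V"
    and x: "x \<in> stratum V \<Psi> \<Phi>'" "w x \<in> stratum V \<Psi> \<Phi>'" and y: "y \<in> stratum V \<Psi> \<Phi>'"
  shows "w y \<in> stratum V \<Psi> \<Phi>'"
proof -
  have "(a \<circ> w) y = 0 \<longleftrightarrow> (a \<circ> w) x = 0" if "a \<in> \<Psi>" for a
    using comp_weyl_group_closed[OF w \<Psi> closed that] x(1) y unfolding mem_stratum_iff[OF sub]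
    by metis
  then show ?thesis
    using x(2) y V by (simp add: mem_stratum_iff[OF sub])
qed

lemma openin_stratum_orbit_saturation:
  fixes V U :: "(complex^'n) set" and \<Psi> \<Phi>' :: "(complex^'n \<Rightarrow> complex) set"
  defines "S \<equiv> stratum V \<Psi> \<Phi>'"
  assumes \<Psi>: "coroot_normalized cor \<Psi>" and closed: "\<forall>a\<in>\<Psi>. \<forall>b\<in>\<Psi>. drefl cor a b \<in> \<Psi>"
    and sub: "\<Phi>' \<subseteq> \<Psi>" and V: "\<And>w x. w \<in> weyl_group cor \<Psi> \<Longrightarrow> x \<in> V \<Longrightarrow> w x \<in> V"
    and U: "openin (top_of_set S) U"
  shows "openin (top_of_set S) (orbit_rel (weyl_group cor \<Psi>) S `` U)"
proof -
  let ?W = "weyl_group cor \<Psi>"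
  obtain G where G: "open G" "U = S \<inter> G"
    using U by (auto simp: openin_open)
  have transport: "w ` S \<subseteq> S" if "w \<in> ?W" "x \<in> S" "w x \<in> S" for w x
    using weyl_group_stratum_transport[OF \<Psi> closed sub that(1) V[OF that(1)]] that(2,3)
    unfolding S_def by blast
  have related: "(x, y) \<in> orbit_rel ?W S \<longleftrightarrow> x \<in> S \<and> y \<in> S \<and> (\<exists>w\<in>?W. x = w y)" for x y
    unfolding orbit_rel_def using weyl_group_orbit_eq_iff[OF \<Psi>, of y x] by auto
  have "orbit_rel ?W S `` U = S \<inter> (\<Union>w\<in>{w \<in> ?W. w ` S \<subseteq> S}. w -` G)"
  proof safe
    fix x y
    assume "(x, y) \<in> orbit_rel ?W S" "x \<in> U"
    then obtain w where "y \<in> S" "w \<in> ?W" "w y \<in> S \<inter> G"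
      using G(2) by (auto simp: related)
    then show "y \<in> S" "y \<in> (\<Union>w\<in>{w \<in> ?W. w ` S \<subseteq> S}. w -` G)"
      using transport by blast+
  next
    fix y w
    assume "y \<in> S" "w \<in> ?W" "w ` S \<subseteq> S" "w y \<in> G"
    then have "(w y, y) \<in> orbit_rel ?W S" and "w y \<in> U"
      using G(2) by (auto simp: related)
    then show "y \<in> orbit_rel ?W S `` U"
      by blast
  qed
  moreover have "open (\<Union>w\<in>{w \<in> ?W. w ` S \<subseteq> S}. w -` G)"
    using G(1) \<Psi> by (auto intro!: open_vimage continuous_on_linear_vec linear_weyl_group)
  ultimately show ?thesis
    by (simp add: openin_open_Int)
qed

locale direct_sum_decomposition =
  fixes I :: "'i set" and T :: "'i \<Rightarrow> (complex^'n) set"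
  assumes direct_sum: "internal_direct_sum I T"
begin

definition proj :: "'i \<Rightarrow> complex^'n \<Rightarrow> complex^'n"
  where "proj i x = (THE y. y \<in> (\<Pi>\<^sub>E j\<in>I. T j) \<and> x = (\<Sum>j\<in>I. y j)) i"

lemma finite_index: "finite I"
  using direct_sum unfolding internal_direct_sum_def by blast

lemma component_zero: "i \<in> I \<Longrightarrow> 0 \<in> T i"
  and component_add: "i \<in> I \<Longrightarrow> x \<in> T i \<Longrightarrow> y \<in> T i \<Longrightarrow> x + y \<in> T i"
  and component_smult: "i \<in> I \<Longrightarrow> x \<in> T i \<Longrightarrow> c *s x \<in> T i"
  using direct_sum unfolding internal_direct_sum_def csubspace_vec_def by blast+

lemma component_diff: "i \<in> I \<Longrightarrow> x \<in> T i \<Longrightarrow> y \<in> T i \<Longrightarrow> x - y \<in> T i"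
  using component_add[of i x "(-1) *s y"] component_smult[of i y "-1"] by (simp add: vec_eq_iff)

lemma decomposition_unique: "\<exists>!y. y \<in> (\<Pi>\<^sub>E j\<in>I. T j) \<and> x = (\<Sum>j\<in>I. y j)"
  using direct_sum unfolding internal_direct_sum_def by blast

lemma proj_mem: "i \<in> I \<Longrightarrow> proj i x \<in> T i"
  and sum_proj: "(\<Sum>i\<in>I. proj i x) = x"
  using theI'[OF decomposition_unique[of x]] unfolding proj_def by auto

lemma proj_sum:
  assumes "\<And>j. j \<in> I \<Longrightarrow> z j \<in> T j" and "i \<in> I"
  shows "proj i (\<Sum>j\<in>I. z j) = z i"
proof -
  have "restrict z I \<in> (\<Pi>\<^sub>E j\<in>I. T j) \<and> (\<Sum>j\<in>I. z j) = (\<Sum>j\<in>I. restrict z I j)"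
    using assms(1) by simp
  then have "(THE y. y \<in> (\<Pi>\<^sub>E j\<in>I. T j) \<and> (\<Sum>j\<in>I. z j) = (\<Sum>j\<in>I. y j)) = restrict z I"
    by (intro the1_equality decomposition_unique)
  then show ?thesis
    using assms(2) unfolding proj_def by simp
qed

lemma proj_eqI: "(\<And>i. i \<in> I \<Longrightarrow> proj i x = proj i y) \<Longrightarrow> x = y"
  by (metis sum_proj sum.cong)

lemma proj_component: "k \<in> I \<Longrightarrow> x \<in> T k \<Longrightarrow> i \<in> I \<Longrightarrow> proj i x = (if i = k then x else 0)"
  using proj_sum[of "\<lambda>j. if j = k then x else 0" i] finite_index component_zero by auto

lemma proj_add: "i \<in> I \<Longrightarrow> proj i (x + y) = proj i x + proj i y"
  using proj_sum[of "\<lambda>j. proj j x + proj j y" i]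
  by (simp add: sum.distrib sum_proj proj_mem component_add)

lemma proj_smult: "i \<in> I \<Longrightarrow> proj i (c *s x) = c *s proj i x"
  using proj_sum[of "\<lambda>j. c *s proj j x" i] sum_cmul[of c "\<lambda>j. proj j x" I]
  by (simp add: sum_proj proj_mem component_smult)

lemma linear_proj: "i \<in> I \<Longrightarrow> linear (proj i)"
  by (rule linearI) (simp_all add: proj_add proj_smult scaleR_eq_vector_smult)

lemma homeomorphic_maps_proj:
  assumes S: "\<And>i. i \<in> I \<Longrightarrow> S i \<subseteq> T i"
  shows "homeomorphic_maps (top_of_set {x. \<forall>i\<in>I. proj i x \<in> S i})
           (product_topology (\<lambda>i. top_of_set (S i)) I) (\<lambda>x. \<lambda>i\<in>I. proj i x) (\<lambda>y. \<Sum>i\<in>I. y i)"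
  unfolding homeomorphic_maps_def
proof (intro conjI ballI)
  show "continuous_map (top_of_set {x. \<forall>i\<in>I. proj i x \<in> S i})
      (product_topology (\<lambda>i. top_of_set (S i)) I) (\<lambda>x. \<lambda>i\<in>I. proj i x)"
    unfolding continuous_map_componentwise
    by (auto simp: continuous_map_in_subtopology intro!: continuous_on_linear_vec linear_proj)
  have proj_sum_S: "proj i (\<Sum>j\<in>I. y j) = y i"
    if "y \<in> topspace (product_topology (\<lambda>i. top_of_set (S i)) I)" "i \<in> I" for y i
    using that S by (intro proj_sum) (auto simp: PiE_iff)
  show "continuous_map (product_topology (\<lambda>i. top_of_set (S i)) I)
      (top_of_set {x. \<forall>i\<in>I. proj i x \<in> S i}) (\<lambda>y. \<Sum>i\<in>I. y i)"
    unfolding continuous_map_in_subtopology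
  proof
    show "continuous_map (product_topology (\<lambda>i. top_of_set (S i)) I) euclidean (\<lambda>y. \<Sum>i\<in>I. y i)"
      using finite_index continuous_map_into_fulltopology[OF
          continuous_map_product_projection[of _ I "\<lambda>i. top_of_set (S i)"]]
      by (intro continuous_map_sum) auto
    show "(\<lambda>y. \<Sum>i\<in>I. y i) \<in> topspace (product_topology (\<lambda>i. top_of_set (S i)) I)
        \<rightarrow> {x. \<forall>i\<in>I. proj i x \<in> S i}"
      using proj_sum_S by (auto simp: PiE_iff)
  qed
  show "(\<Sum>i\<in>I. (\<lambda>i\<in>I. proj i x) i) = x" for x
    by (simp add: sum_proj)
  show "(\<lambda>i\<in>I. proj i (\<Sum>j\<in>I. y j)) = y"
    if "y \<in> topspace (product_topology (\<lambda>i. top_of_set (S i)) I)" for y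
    using that proj_sum_S by (auto simp: PiE_iff extensional_def fun_eq_iff)
qed

end

locale cartan_decomposition = direct_sum_decomposition I T
  for I :: "'i set" and T :: "'i \<Rightarrow> (complex^'n) set" +
  fixes Phi :: "'i \<Rightarrow> (complex^'n \<Rightarrow> complex) set"
    and cor :: "(complex^'n \<Rightarrow> complex) \<Rightarrow> complex^'n"
    and \<Phi> :: "(complex^'n \<Rightarrow> complex) set"
  assumes roots: "\<And>i. i \<in> I \<Longrightarrow> root_system_in (T i) (Phi i) cor"
    and vanish: "\<And>i j a x. i \<in> I \<Longrightarrow> j \<in> I \<Longrightarrow> j \<noteq> i \<Longrightarrow> a \<in> Phi i \<Longrightarrow> x \<in> T j \<Longrightarrow> a x = 0"
    and subsystem: "root_subsystem cor \<Phi> (\<Union>i\<in>I. Phi i)"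
begin

abbreviation "Phi_g \<equiv> \<Union>i\<in>I. Phi i"
abbreviation "B_g \<equiv> stratum UNIV Phi_g \<Phi>"
abbreviation "B_i i \<equiv> stratum (T i) (Phi i) (\<Phi> \<inter> Phi i)"
abbreviation "R_g \<equiv> orbit_rel (weyl_group cor Phi_g) B_g"
abbreviation "R_i i \<equiv> orbit_rel (weyl_group cor (Phi i)) (B_i i)"

lemma component_rootD:
  "i \<in> I \<Longrightarrow> a \<in> Phi i \<Longrightarrow>
    clinear_fun a \<and> cor a \<in> T i \<and> a (cor a) = 2 \<and> (\<forall>b\<in>Phi i. drefl cor a b \<in> Phi i)"
  using roots[of i] unfolding root_system_in_def by blast

lemma coroot_normalized_component: "i \<in> I \<Longrightarrow> coroot_normalized cor (Phi i)"
  using roots by (rule root_system_in_imp_coroot_normalized)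

lemma coroot_normalized_all: "coroot_normalized cor Phi_g"
  using component_rootD unfolding coroot_normalized_def by blast

lemma root_proj: "k \<in> I \<Longrightarrow> a \<in> Phi k \<Longrightarrow> a (proj k x) = a x"
proof -
  assume k: "k \<in> I" and a: "a \<in> Phi k"
  have lin: "clinear_fun a"
    using component_rootD[OF k a] by blast
  have "a x = (\<Sum>j\<in>I. a (proj j x))"
    using clinear_fun_sum[OF lin, of "\<lambda>j. proj j x" I] by (simp add: sum_proj)
  also have "\<dots> = a (proj k x) + (\<Sum>j\<in>I - {k}. a (proj j x))"
    using k finite_index by (simp add: sum.remove)
  also have "(\<Sum>j\<in>I - {k}. a (proj j x)) = 0"
    using vanish[OF k _ _ a] proj_mem by (intro sum.neutral) auto
  finally show ?thesis
    by simp
qed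

lemma proj_refl:
  assumes k: "k \<in> I" and a: "a \<in> Phi k" and i: "i \<in> I"
  shows "proj i (refl cor a x) = (if i = k then refl cor a (proj k x) else proj i x)"
proof -
  have "proj i (refl cor a x) = proj i x - a x *s proj i (cor a)"
    unfolding refl_def using linear_proj[OF i] by (simp add: linear_diff proj_smult i)
  then show ?thesis
    using proj_component[OF k _ i] component_rootD[OF k a] root_proj[OF k a, of x]
    unfolding refl_def by auto
qed

lemma proj_weyl_group_component:
  assumes "w \<in> weyl_group cor (Phi k)" and k: "k \<in> I" and i: "i \<in> I"
  shows "proj i (w x) = (if i = k then w (proj k x) else proj i x)"
  using assms(1) i
proof (induction w arbitrary: x i rule: weyl_group.induct)
  case weyl_id
  then show ?case by simp
next
  case (weyl_step a w)
  then show ?case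
    using proj_refl[OF k weyl_step.hyps(1) weyl_step.prems, of "w x"] weyl_step.IH[OF k]
      proj_refl[OF k weyl_step.hyps(1) k]
    by simp
qed

lemma weyl_group_component_preserves:
  "w \<in> weyl_group cor (Phi k) \<Longrightarrow> k \<in> I \<Longrightarrow> x \<in> T k \<Longrightarrow> w x \<in> T k"
proof (induction w rule: weyl_group.induct)
  case weyl_id
  then show ?case by simp
next
  case (weyl_step a w)
  then show ?case
    using component_rootD[OF weyl_step.prems(1) weyl_step.hyps(1)]
    unfolding refl_def by (auto intro: component_diff component_smult)
qed

lemma weyl_group_all_decompose:
  assumes "w \<in> weyl_group cor Phi_g"
  obtains ws where "\<And>i. i \<in> I \<Longrightarrow> ws i \<in> weyl_group cor (Phi i)"
    and "\<And>i x. i \<in> I \<Longrightarrow> proj i (w x) = ws i (proj i x)"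
  using assms
proof (induction w arbitrary: thesis rule: weyl_group.induct)
  case weyl_id
  then show ?case
    using weyl_group.weyl_id by fastforce
next
  case (weyl_step a w)
  obtain k where k: "k \<in> I" "a \<in> Phi k"
    using weyl_step.hyps(1) by blast
  obtain ws where ws: "\<And>i. i \<in> I \<Longrightarrow> ws i \<in> weyl_group cor (Phi i)"
    "\<And>i x. i \<in> I \<Longrightarrow> proj i (w x) = ws i (proj i x)"
    using weyl_step.IH by blast
  show ?case
  proof (rule weyl_step.prems)
    show "(ws(k := refl cor a \<circ> ws k)) i \<in> weyl_group cor (Phi i)" if "i \<in> I" for i
      using ws(1)[OF that] ws(1)[OF k(1)] k(2) by (auto intro: weyl_group.weyl_step)
    show "proj i ((refl cor a \<circ> w) x) = (ws(k := refl cor a \<circ> ws k)) i (proj i x)" if "i \<in> I" for i x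
      using proj_refl[OF k that, of "w x"] ws(2)[OF that] ws(2)[OF k(1)] by auto
  qed
qed

lemma weyl_group_all_of_components_partial:
  assumes "finite J" "J \<subseteq> I" and ws: "\<And>i. i \<in> I \<Longrightarrow> ws i \<in> weyl_group cor (Phi i)"
  shows "\<exists>w\<in>weyl_group cor Phi_g.
    \<forall>i\<in>I. \<forall>x. proj i (w x) = (if i \<in> J then ws i (proj i x) else proj i x)"
  using assms(1,2)
proof (induction J rule: finite_induct)
  case empty
  show ?case
    by (rule bexI[of _ id]) (simp_all add: weyl_group.weyl_id)
next
  case (insert k J)
  then obtain w where w: "w \<in> weyl_group cor Phi_g"
    "\<forall>i\<in>I. \<forall>x. proj i (w x) = (if i \<in> J then ws i (proj i x) else proj i x)"
    by auto
  have k: "k \<in> I"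
    using insert.prems by blast
  have "ws k \<circ> w \<in> weyl_group cor Phi_g"
    using weyl_group_comp[OF weyl_group_mono[OF ws[OF k]] w(1)] k by blast
  moreover have "proj i ((ws k \<circ> w) x) = (if i \<in> insert k J then ws i (proj i x) else proj i x)"
    if "i \<in> I" for i x
    using proj_weyl_group_component[OF ws[OF k] k that, of "w x"] w(2) k that insert.hyps(2) by auto
  ultimately show ?case
    by blast
qed

lemma weyl_group_all_of_components:
  assumes "\<And>i. i \<in> I \<Longrightarrow> ws i \<in> weyl_group cor (Phi i)"
  obtains w where "w \<in> weyl_group cor Phi_g" "\<And>i x. i \<in> I \<Longrightarrow> proj i (w x) = ws i (proj i x)"
  using weyl_group_all_of_components_partial[OF finite_index order_refl assms] by auto

lemma mem_B_g_iff: "X \<in> B_g \<longleftrightarrow> (\<forall>i\<in>I. proj i X \<in> B_i i)"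
proof -
  have sub: "\<Phi> \<subseteq> Phi_g"
    using subsystem unfolding root_subsystem_def by blast
  show ?thesis
    unfolding mem_stratum_iff[OF sub] mem_stratum_iff[OF Int_lower2]
    using proj_mem by (auto simp: root_proj)
qed

lemma orbit_rel_all_iff:
  assumes X: "X \<in> B_g" and Y: "Y \<in> B_g"
  shows "(X, Y) \<in> R_g \<longleftrightarrow> (\<forall>i\<in>I. (proj i X, proj i Y) \<in> R_i i)"
proof -
  have X_i: "proj i X \<in> B_i i" and Y_i: "proj i Y \<in> B_i i" if "i \<in> I" for i
    using X Y that by (auto simp: mem_B_g_iff)
  have "(X, Y) \<in> R_g \<longleftrightarrow> (\<exists>w\<in>weyl_group cor Phi_g. Y = w X)"
    using X Y weyl_group_orbit_eq_iff[OF coroot_normalized_all] by (simp add: orbit_rel_def)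
  also have "\<dots> \<longleftrightarrow> (\<forall>i\<in>I. \<exists>w\<in>weyl_group cor (Phi i). proj i Y = w (proj i X))"
  proof
    assume "\<exists>w\<in>weyl_group cor Phi_g. Y = w X"
    then obtain w where "w \<in> weyl_group cor Phi_g" "Y = w X"
      by blast
    then show "\<forall>i\<in>I. \<exists>w\<in>weyl_group cor (Phi i). proj i Y = w (proj i X)"
      by (metis weyl_group_all_decompose)
  next
    assume "\<forall>i\<in>I. \<exists>w\<in>weyl_group cor (Phi i). proj i Y = w (proj i X)"
    then obtain ws
      where ws: "\<And>i. i \<in> I \<Longrightarrow> ws i \<in> weyl_group cor (Phi i) \<and> proj i Y = ws i (proj i X)"
      by metis
    obtain w where "w \<in> weyl_group cor Phi_g" "\<And>i x. i \<in> I \<Longrightarrow> proj i (w x) = ws i (proj i x)"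
      using weyl_group_all_of_components ws by metis
    then show "\<exists>w\<in>weyl_group cor Phi_g. Y = w X"
      using ws by (metis proj_eqI)
  qed
  also have "\<dots> \<longleftrightarrow> (\<forall>i\<in>I. (proj i X, proj i Y) \<in> R_i i)"
    using X_i Y_i weyl_group_orbit_eq_iff[OF coroot_normalized_component] by (simp add: orbit_rel_def)
  finally show ?thesis .
qed

abbreviation "Q_i i \<equiv> quot_topology (top_of_set (B_i i)) (R_i i)"

lemma open_map_orbit_class:
  assumes i: "i \<in> I"
  shows "open_map (top_of_set (B_i i)) (Q_i i) (\<lambda>z. R_i i `` {z})"
proof (rule open_map_quot_topology)
  show "equiv (topspace (top_of_set (B_i i))) (R_i i)"
    by (simp add: equiv_orbit_rel)
  show "openin (top_of_set (B_i i)) (R_i i `` U)" if "openin (top_of_set (B_i i)) U" for U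
    using component_rootD[OF i] weyl_group_component_preserves[OF _ i]
    by (intro openin_stratum_orbit_saturation coroot_normalized_component[OF i] that) auto
qed

lemma quotient_map_stratum:
  "quotient_map (top_of_set B_g) (product_topology Q_i I) (\<lambda>X. \<lambda>i\<in>I. R_i i `` {proj i X})"
proof -
  have "B_g = {X. \<forall>i\<in>I. proj i X \<in> B_i i}"
    by (auto simp: mem_B_g_iff)
  then have "homeomorphic_map (top_of_set B_g) (product_topology (\<lambda>i. top_of_set (B_i i)) I)
      (\<lambda>X. \<lambda>i\<in>I. proj i X)"
    using homeomorphic_maps_proj[of B_i] homeomorphic_maps_imp_map by (auto simp: stratum_def)
  moreover have "quotient_map (product_topology (\<lambda>i. top_of_set (B_i i)) I) (product_topology Q_i I)
      (\<lambda>y. \<lambda>i\<in>I. R_i i `` {y i})"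
  proof (rule quotient_map_product_map)
    fix i
    assume i: "i \<in> I"
    have q: "quotient_map (top_of_set (B_i i)) (Q_i i) (\<lambda>z. R_i i `` {z})"
      by (simp add: quotient_map_quot_topology equiv_orbit_rel)
    show "continuous_map (top_of_set (B_i i)) (Q_i i) (\<lambda>z. R_i i `` {z})"
      using q by (rule quotient_imp_continuous_map)
    show "(\<lambda>z. R_i i `` {z}) ` topspace (top_of_set (B_i i)) = topspace (Q_i i)"
      using q by (rule quotient_imp_surjective_map)
    show "open_map (top_of_set (B_i i)) (Q_i i) (\<lambda>z. R_i i `` {z})"
      using i by (rule open_map_orbit_class)
  qed
  ultimately have "quotient_map (top_of_set B_g) (product_topology Q_i I)
      ((\<lambda>y. \<lambda>i\<in>I. R_i i `` {y i}) \<circ> (\<lambda>X. \<lambda>i\<in>I. proj i X))"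
    unfolding homeomorphic_map_def by (blast intro: quotient_map_compose)
  then show ?thesis
    by (simp add: o_def cong: restrict_cong)
qed

lemma orbit_classes_eq_iff:
  assumes "X \<in> B_g" "Y \<in> B_g"
  shows "(\<lambda>i\<in>I. R_i i `` {proj i X}) = (\<lambda>i\<in>I. R_i i `` {proj i Y}) \<longleftrightarrow> (X, Y) \<in> R_g"
  using assms
  by (auto simp: orbit_rel_all_iff fun_eq_iff mem_B_g_iff eq_equiv_class_iff[OF equiv_orbit_rel]
      split: if_splits)

end

theorem corollary3p1:
  fixes I :: "'i set"
    and T :: "'i \<Rightarrow> (complex^'n) set"
    and Phi :: "'i \<Rightarrow> (complex^'n \<Rightarrow> complex) set"
    and cor :: "(complex^'n \<Rightarrow> complex) \<Rightarrow> complex^'n"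
    and \<Phi> :: "(complex^'n \<Rightarrow> complex) set"
  assumes dsum: "internal_direct_sum I T"
    and roots: "\<And>i. i \<in> I \<Longrightarrow> root_system_in (T i) (Phi i) cor"
    and vanish: "\<And>i j a x. i \<in> I \<Longrightarrow> j \<in> I \<Longrightarrow> j \<noteq> i \<Longrightarrow> a \<in> Phi i \<Longrightarrow> x \<in> T j \<Longrightarrow> a x = 0"
    and disj: "disjoint_family_on Phi I"
    and sub: "root_subsystem cor \<Phi> (\<Union>i\<in>I. Phi i)"
  shows "quot_topology (subtopology euclidean (stratum UNIV (\<Union>i\<in>I. Phi i) \<Phi>))
           (orbit_rel (weyl_group cor (\<Union>i\<in>I. Phi i)) (stratum UNIV (\<Union>i\<in>I. Phi i) \<Phi>))
         homeomorphic_space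
         product_topology
           (\<lambda>i. quot_topology (subtopology euclidean (stratum (T i) (Phi i) (\<Phi> \<inter> Phi i)))
                  (orbit_rel (weyl_group cor (Phi i)) (stratum (T i) (Phi i) (\<Phi> \<inter> Phi i)))) I"
proof -
  interpret cartan_decomposition I T Phi cor \<Phi>
    using dsum roots vanish sub by unfold_locales
  show ?thesis
  proof (rule quot_topology_homeomorphic_space)
    show "equiv (topspace (top_of_set B_g)) R_g"
      by (simp add: equiv_orbit_rel)
    show "quotient_map (top_of_set B_g) (product_topology Q_i I) (\<lambda>X. \<lambda>i\<in>I. R_i i `` {proj i X})"
      by (rule quotient_map_stratum)
  qed (simp add: orbit_classes_eq_iff)
qed

end
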